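(* Let $G$ be an $n$-node graph of arboricity at most $a$ ($a\ge1$ an integer), let $k\ge 5a$, and let $C_1,C_2,\dots$ be the layers of the Decomposition procedure with parameters $b=2a$ and $k$. Let $E_1$ be the set of atypical edges. Suppose each node $u$ assigns to each edge of $E_1$ joining $u$ to a higher node a color in $\{1,\dots,2a\}$, distinct edges at $u$ receiving distinct colors (this is possible), and let $F_i\subseteq E_1$ be the set of edges with color $i$. Then for each $i\in\{1,\dots,2a\}$, the graph $G[F_i]$ is a forest in which every node has at most one higher neighbor. Moreover, if $c_i$ is any proper $3$-coloring of the nodes of $G[F_i]$ and $F_{i,j}=\{e\in F_i: c_i(\text{higher endpoint of } e)=j\}$ for $j\in\{1,2,3\}$, then every connected component of $G[F_{i,j}]$ is a star whose center is the highest node of the component.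
   Context: Decomposition procedure with parameters $b,k$ on a graph $G$: set $V_0=V(G)$; for $i=1,2,\dots$: let $C_i$ be the set of nodes $u\in V_{i-1}$ with $\deg_{G[V_{i-1}]}(u)\le k$ such that at most $b$ neighbors of $u$ in $G[V_{i-1}]$ have degree greater than $k$ in $G[V_{i-1}]$; set $V_i=V_{i-1}\setminus C_i$; continue until all nodes are in some layer. Node $u$ is lower than node $v$ (and $v$ higher than $u$) if $u$'s layer index is smaller, or they are in the same layer and $u$ has smaller ID; the higher endpoint of an edge is its higher node. An edge $e=\{u,v\}$ with $u\in C_i$, $v\in C_j$, $i<j$ is atypical if $\deg_{G[V_{i-1}]}(v)>k$; $E_1$ is the set of atypical edges. $G[F]$ denotes the graph with edge set $F$ and vertex set the endpoints of edges in $F$. *)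

theory Defs
  imports Main
begin

text \<open>Simple graphs: vertex set V, edge set E of 2-element subsets of V.
  Node IDs are given by a linear order on the vertex type.\<close>

definition simple_graph :: "'a set \<Rightarrow> 'a set set \<Rightarrow> bool" where
  "simple_graph V E \<longleftrightarrow> finite V \<and>
     (\<forall>e\<in>E. \<exists>u v. e = {u, v} \<and> u \<noteq> v \<and> u \<in> V \<and> v \<in> V)"

definition verts :: "'a set set \<Rightarrow> 'a set" where
  "verts F = \<Union>F"

definition forest :: "'a set set \<Rightarrow> bool" where
  "forest F \<longleftrightarrow> \<not> (\<exists>vs. length vs \<ge> 3 \<and> distinct vs \<and>
      (\<forall>i<length vs. {vs ! i, vs ! ((i + 1) mod length vs)} \<in> F))"

definition arboricity_le :: "'a set set \<Rightarrow> nat \<Rightarrow> bool" where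
  "arboricity_le E a \<longleftrightarrow> (\<exists>Fs. (\<forall>i<a. forest (Fs i)) \<and> E = (\<Union>i<a. Fs i))"

definition deg_in :: "'a set set \<Rightarrow> 'a set \<Rightarrow> 'a \<Rightarrow> nat" where
  "deg_in E W u = card {v \<in> W. {u, v} \<in> E}"

text \<open>Set C_i of nodes removed in round i, given V_{i-1} = W.\<close>
definition removed :: "'a set set \<Rightarrow> nat \<Rightarrow> nat \<Rightarrow> 'a set \<Rightarrow> 'a set" where
  "removed E b k W = {u \<in> W. deg_in E W u \<le> k \<and>
      card {v \<in> W. {u, v} \<in> E \<and> deg_in E W v > k} \<le> b}"

primrec Vset :: "'a set \<Rightarrow> 'a set set \<Rightarrow> nat \<Rightarrow> nat \<Rightarrow> nat \<Rightarrow> 'a set" where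
  "Vset V E b k 0 = V"
| "Vset V E b k (Suc i) = Vset V E b k i - removed E b k (Vset V E b k i)"

definition layer_set :: "'a set \<Rightarrow> 'a set set \<Rightarrow> nat \<Rightarrow> nat \<Rightarrow> nat \<Rightarrow> 'a set" where
  "layer_set V E b k i = (if i = 0 then {} else removed E b k (Vset V E b k (i - 1)))"

definition layer :: "'a set \<Rightarrow> 'a set set \<Rightarrow> nat \<Rightarrow> nat \<Rightarrow> 'a \<Rightarrow> nat" where
  "layer V E b k u = (LEAST i. u \<in> layer_set V E b k i)"

definition lower :: "'a set \<Rightarrow> 'a set set \<Rightarrow> nat \<Rightarrow> nat \<Rightarrow> 'a::linorder \<Rightarrow> 'a \<Rightarrow> bool" where
  "lower V E b k u v \<longleftrightarrow> layer V E b k u < layer V E b k v \<or>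
      (layer V E b k u = layer V E b k v \<and> u < v)"

definition atypical :: "'a set \<Rightarrow> 'a set set \<Rightarrow> nat \<Rightarrow> nat \<Rightarrow> 'a set set" where
  "atypical V E b k = {e \<in> E. \<exists>u v. e = {u, v} \<and> layer V E b k u < layer V E b k v \<and>
      deg_in E (Vset V E b k (layer V E b k u - 1)) v > k}"

definition valid_col :: "'a::linorder set \<Rightarrow> 'a set set \<Rightarrow> nat \<Rightarrow> nat \<Rightarrow> nat \<Rightarrow> ('a set \<Rightarrow> nat) \<Rightarrow> bool" where
  "valid_col V E b k a col \<longleftrightarrow>
     (\<forall>e\<in>atypical V E b k. col e \<in> {1..2*a}) \<and>
     (\<forall>u. inj_on col {e \<in> atypical V E b k. \<exists>v. e = {u, v} \<and> lower V E b k u v})"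

definition adj_rel :: "'a set set \<Rightarrow> ('a \<times> 'a) set" where
  "adj_rel F = {(x, y). {x, y} \<in> F \<and> x \<noteq> y}"

definition components :: "'a set set \<Rightarrow> 'a set set" where
  "components F = {{w. (v, w) \<in> (adj_rel F)\<^sup>*} | v. v \<in> verts F}"

end

theory Submission
  imports Defs "HOL-Library.Product_Lexorder"
begin

text \<open>Each round of the decomposition removes a node: G[W] has at most a|W| edges, so some node has
  degree at most 2a \<le> k in G[W], and then at most 2a of its neighbours have large degree. Hence
  every node u lies in a layer C_i, and an atypical edge from u to a higher node v ends in a
  neighbour of degree > k in G[V_(i-1)]; there are at most b = 2a of them, so the colouring
  exists. In a colour class F_i every node has at most one higher neighbour. Ordering the nodes
  by (layer, ID), the lowest node of a cycle would have two, so F_i is a forest. In F_(i,j) every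
  higher endpoint has colour j and, the colouring being proper, no lower endpoint has; so a
  component consists of a node of colour j together with nodes whose only higher neighbour it is,
  a star centred at its highest node.\<close>

section \<open>Edge counts in graphs of bounded arboricity\<close>

lemma not_forest_if_path_closes:
  assumes "distinct vs" and path: "\<And>i. Suc i < length vs \<Longrightarrow> {vs ! i, vs ! Suc i} \<in> F"
    and "2 \<le> j" "j < length vs" and closing: "{vs ! 0, vs ! j} \<in> F"
  shows "\<not> forest F"
proof -
  define cyc where "cyc = take (Suc j) vs"
  have len: "length cyc = Suc j" using \<open>j < length vs\<close> by (simp add: cyc_def)
  have "{cyc ! i, cyc ! ((i + 1) mod length cyc)} \<in> F" if "i < length cyc" for i
  proof (cases "i = j")
    case True
    then show ?thesis using closing len by (simp add: cyc_def insert_commute)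
  next
    case False
    with that len have "Suc i < Suc j" by simp
    then show ?thesis using path[of i] \<open>j < length vs\<close> len by (simp add: cyc_def)
  qed
  moreover have "distinct cyc" using \<open>distinct vs\<close> by (simp add: cyc_def)
  moreover have "3 \<le> length cyc" using \<open>2 \<le> j\<close> len by simp
  ultimately show ?thesis unfolding forest_def by blast
qed

lemma not_forest_if_min_degree_two:
  assumes "finite W" "W \<noteq> {}"
    and two_nbrs: "\<And>x. x \<in> W \<Longrightarrow> \<exists>y\<in>W. \<exists>z\<in>W. y \<noteq> z \<and> y \<noteq> x \<and> z \<noteq> x \<and> {x, y} \<in> F \<and> {x, z} \<in> F"
  shows "\<not> forest F"
proof -
  \<comment> \<open>Prolong a path at its head by a neighbour other than the next vertex; as W is finite,
    this neighbour eventually lies on the path and closes a cycle.\<close>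
  have path_not_forest: "\<not> forest F" if "vs \<noteq> []" "distinct vs" "set vs \<subseteq> W"
      "\<And>i. Suc i < length vs \<Longrightarrow> {vs ! i, vs ! Suc i} \<in> F" for vs
    using that
  proof (induction "card W - length vs" arbitrary: vs rule: less_induct)
    case less
    obtain v0 rest where vs: "vs = v0 # rest" using \<open>vs \<noteq> []\<close> by (cases vs) auto
    obtain y z where yz: "y \<in> W" "z \<in> W" "y \<noteq> z" "y \<noteq> v0" "z \<noteq> v0" "{v0, y} \<in> F" "{v0, z} \<in> F"
      using two_nbrs[of v0] less.prems(3) vs by auto
    then obtain x where x: "x \<in> W" "x \<noteq> v0" "{v0, x} \<in> F" and x_new: "rest \<noteq> [] \<Longrightarrow> x \<noteq> hd rest"
    proof (cases "rest \<noteq> [] \<and> y = hd rest")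
      case True
      then show ?thesis using that[of z] yz by auto
    next
      case False
      then show ?thesis using that[of y] yz by auto
    qed
    show ?case
    proof (cases "x \<in> set vs")
      case False
      have "length (x # vs) \<le> card W"
        using False less.prems(2,3) x(1) \<open>finite W\<close>
        by (metis card_mono distinct.simps(2) distinct_card insert_subset list.set(2))
      moreover have "{(x # vs) ! i, (x # vs) ! Suc i} \<in> F" if "Suc i < length (x # vs)" for i
        using that x(3) vs less.prems(4)[of "i - 1"] by (cases i) (auto simp: insert_commute)
      ultimately show ?thesis
        using less.hyps[of "x # vs"] less.prems(2,3) False x(1) by (auto simp: diff_less_mono2)
    next
      case True
      then obtain j where j: "j < length vs" "vs ! j = x" by (metis in_set_conv_nth)
      have "j \<noteq> 0" using j x(2) vs by (metis nth_Cons_0)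
      moreover have "j \<noteq> 1" using j x_new vs by (cases rest) (auto simp: One_nat_def)
      ultimately have "2 \<le> j" by simp
      then show ?thesis using not_forest_if_path_closes[OF less.prems(2,4)] j x(3) vs by simp
    qed
  qed
  obtain x where "x \<in> W" using \<open>W \<noteq> {}\<close> by blast
  then show ?thesis using path_not_forest[of "[x]"] by simp
qed

lemma forest_card_edges_le:
  assumes "forest F" and "finite W"
  shows "card {e \<in> F. e \<subseteq> W \<and> card e = 2} \<le> card W"
  using \<open>finite W\<close>
proof (induction W rule: finite_psubset_induct)
  case (psubset W)
  let ?edges = "\<lambda>W. {e \<in> F. e \<subseteq> W \<and> card e = 2}"
  let ?nbrs = "\<lambda>x. {y \<in> W. y \<noteq> x \<and> {x, y} \<in> F}"
  show ?case
  proof (cases "\<exists>x\<in>W. card (?nbrs x) \<le> 1")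
    case True
    then obtain x where x: "x \<in> W" "card (?nbrs x) \<le> 1" by blast
    have "?edges W \<subseteq> ?edges (W - {x}) \<union> (\<lambda>y. {x, y}) ` ?nbrs x"
    proof
      fix e assume e: "e \<in> ?edges W"
      show "e \<in> ?edges (W - {x}) \<union> (\<lambda>y. {x, y}) ` ?nbrs x"
      proof (cases "x \<in> e")
        case True
        moreover obtain p q where "e = {p, q}" "p \<noteq> q" using e by (auto simp: card_2_iff)
        ultimately obtain y where "e = {x, y}" "y \<noteq> x" by (auto simp: insert_commute)
        then show ?thesis using e by auto
      qed (use e in auto)
    qed
    moreover have "finite (?edges (W - {x}))"
      by (rule finite_subset[of _ "Pow W"]) (use psubset.hyps(1) in auto)
    moreover have fin_nbrs: "finite (?nbrs x)" using psubset.hyps(1) by (rule rev_finite_subset) auto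
    ultimately have "card (?edges W) \<le> card (?edges (W - {x}) \<union> (\<lambda>y. {x, y}) ` ?nbrs x)"
      by (intro card_mono) auto
    also have "\<dots> \<le> card (?edges (W - {x})) + card (?nbrs x)"
      by (rule order.trans[OF card_Un_le add_left_mono[OF card_image_le[OF fin_nbrs]]])
    also have "\<dots> \<le> card (W - {x}) + 1"
    proof -
      have "W - {x} \<subset> W" using x(1) by auto
      then show ?thesis using psubset.IH[of "W - {x}"] x(2) by linarith
    qed
    also have "\<dots> = card W" using x(1) psubset.hyps(1) by (metis card.remove Suc_eq_plus1)
    finally show ?thesis .
  next
    case False
    have "\<exists>y\<in>W. \<exists>z\<in>W. y \<noteq> z \<and> y \<noteq> x \<and> z \<noteq> x \<and> {x, y} \<in> F \<and> {x, z} \<in> F"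
      if "x \<in> W" for x
    proof -
      have "finite (?nbrs x)" using psubset.hyps(1) by (rule rev_finite_subset) auto
      moreover have "\<not> card (?nbrs x) \<le> Suc 0" using False that by simp
      ultimately have "\<not> (\<forall>y\<in>?nbrs x. \<forall>z\<in>?nbrs x. y = z)"
        using card_le_Suc0_iff_eq by blast
      then show ?thesis by blast
    qed
    then have "W = {}"
      using not_forest_if_min_degree_two[OF psubset.hyps(1)] \<open>forest F\<close> by blast
    then show ?thesis by simp
  qed
qed

lemma arboricity_card_edges_le:
  assumes "arboricity_le E a" and "\<And>e. e \<in> E \<Longrightarrow> card e = 2" and "finite W"
  shows "card {e \<in> E. e \<subseteq> W} \<le> a * card W"
proof -
  obtain Fs where forests: "\<And>i. i < a \<Longrightarrow> forest (Fs i)" and E: "E = (\<Union>i<a. Fs i)"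
    using assms(1) unfolding arboricity_le_def by blast
  have "{e \<in> E. e \<subseteq> W} = (\<Union>i<a. {e \<in> Fs i. e \<subseteq> W \<and> card e = 2})"
    using assms(2) E by auto
  also have "card \<dots> \<le> (\<Sum>i<a. card {e \<in> Fs i. e \<subseteq> W \<and> card e = 2})"
    by (rule card_UN_le) simp
  also have "\<dots> \<le> (\<Sum>i<a. card W)"
    by (rule sum_mono) (simp add: forest_card_edges_le forests \<open>finite W\<close>)
  finally show ?thesis by simp
qed

lemma card_adjacent_pairs_le:
  fixes E :: "'a::linorder set set"
  assumes "finite W"
  shows "card {(x, y). x \<in> W \<and> y \<in> W \<and> x \<noteq> y \<and> {x, y} \<in> E} \<le> 2 * card {e \<in> E. e \<subseteq> W}"
proof -
  let ?P = "{(x, y). x \<in> W \<and> y \<in> W \<and> x \<noteq> y \<and> {x, y} \<in> E}"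
  let ?Q = "{(x, y). x \<in> W \<and> y \<in> W \<and> x < y \<and> {x, y} \<in> E}"
  have finQ: "finite ?Q" by (rule finite_subset[of _ "W \<times> W"]) (use assms in auto)
  have "?P \<subseteq> ?Q \<union> prod.swap ` ?Q"
  proof
    fix p assume "p \<in> ?P"
    then obtain x y where p: "p = (x, y)" "x \<in> W" "y \<in> W" "x \<noteq> y" "{x, y} \<in> E" by blast
    show "p \<in> ?Q \<union> prod.swap ` ?Q"
    proof (cases "x < y")
      case False
      then have "(y, x) \<in> ?Q" using p by (auto simp: insert_commute)
      then show ?thesis using p(1) by force
    qed (use p in blast)
  qed
  then have "card ?P \<le> card (?Q \<union> prod.swap ` ?Q)"
    by (intro card_mono) (simp_all add: finQ)
  also have "\<dots> \<le> card ?Q + card (prod.swap ` ?Q)" by (rule card_Un_le)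
  also have "card (prod.swap ` ?Q) = card ?Q" by (simp add: card_image)
  also have "card ?Q = card ((\<lambda>(x, y). {x, y}) ` ?Q)"
    by (rule card_image[symmetric], rule inj_onI) (auto simp: doubleton_eq_iff)
  also have "\<dots> \<le> card {e \<in> E. e \<subseteq> W}"
    by (rule card_mono) (auto intro: finite_subset[of _ "Pow W"] simp: assms)
  finally show ?thesis by simp
qed

lemma simple_graph_card_edge: "simple_graph V E \<Longrightarrow> e \<in> E \<Longrightarrow> card e = 2"
  unfolding simple_graph_def by auto

lemma simple_graph_edge_subset: "simple_graph V E \<Longrightarrow> {u, v} \<in> E \<Longrightarrow> u \<in> V \<and> v \<in> V"
  unfolding simple_graph_def by (metis doubleton_eq_iff)

lemma exists_deg_in_le_twice_arboricity:
  fixes E :: "'a::linorder set set"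
  assumes "simple_graph V E" and "arboricity_le E a" and "W \<subseteq> V" and "W \<noteq> {}"
  shows "\<exists>x\<in>W. deg_in E W x \<le> 2 * a"
proof (rule ccontr)
  assume "\<not> ?thesis"
  then have high: "2 * a + 1 \<le> deg_in E W x" if "x \<in> W" for x using that by force
  have "finite W" using assms(1,3) unfolding simple_graph_def by (blast intro: finite_subset)
  have loopless: "{x, y} \<in> E \<Longrightarrow> x \<noteq> y" for x y
    using simple_graph_card_edge[OF assms(1)] by fastforce
  have "(2 * a + 1) * card W \<le> (\<Sum>x\<in>W. deg_in E W x)"
    using sum_mono[of W "\<lambda>_. 2 * a + 1" "deg_in E W"] high by (simp add: ac_simps)
  also have "\<dots> = card (SIGMA x:W. {y \<in> W. {x, y} \<in> E})"
    using \<open>finite W\<close> by (simp add: card_SigmaI deg_in_def)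
  also have "(SIGMA x:W. {y \<in> W. {x, y} \<in> E}) = {(x, y). x \<in> W \<and> y \<in> W \<and> x \<noteq> y \<and> {x, y} \<in> E}"
    using loopless by auto
  also have "card \<dots> \<le> 2 * card {e \<in> E. e \<subseteq> W}"
    by (rule card_adjacent_pairs_le[OF \<open>finite W\<close>])
  also have "\<dots> \<le> 2 * (a * card W)"
    using arboricity_card_edges_le[OF assms(2) simple_graph_card_edge[OF assms(1)] \<open>finite W\<close>]
    by simp
  finally have "card W = 0" by simp
  then show False using \<open>finite W\<close> \<open>W \<noteq> {}\<close> by simp
qed

section \<open>Orientations with at most one higher neighbour\<close>

definition at_most_one_higher_nbr :: "'a set set \<Rightarrow> ('a \<Rightarrow> 'b::linorder) \<Rightarrow> bool" where
  "at_most_one_higher_nbr F h \<longleftrightarrow>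
     (\<forall>u v w. {u, v} \<in> F \<and> {u, w} \<in> F \<and> h u < h v \<and> h u < h w \<longrightarrow> v = w)"

lemma at_most_one_higher_nbrD:
  "at_most_one_higher_nbr F h \<Longrightarrow> {u, v} \<in> F \<Longrightarrow> {u, w} \<in> F \<Longrightarrow> h u < h v \<Longrightarrow> h u < h w \<Longrightarrow> v = w"
  unfolding at_most_one_higher_nbr_def by blast

lemma at_most_one_higher_nbr_subset:
  "at_most_one_higher_nbr F h \<Longrightarrow> G \<subseteq> F \<Longrightarrow> at_most_one_higher_nbr G h"
  unfolding at_most_one_higher_nbr_def by blast

lemma card_higher_nbrs_le_one:
  assumes "at_most_one_higher_nbr F h"
  shows "card {v. {u, v} \<in> F \<and> h u < h v} \<le> 1"
proof (cases "{v. {u, v} \<in> F \<and> h u < h v} = {}")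
  case False
  then obtain v where v: "{u, v} \<in> F" "h u < h v" by blast
  have "{w. {u, w} \<in> F \<and> h u < h w} \<subseteq> {v}"
    using at_most_one_higher_nbrD[OF assms _ v(1) _ v(2)] by blast
  then show ?thesis using card_mono[of "{v}"] by simp
next
  case True
  then show ?thesis by (metis card.empty le0)
qed

lemma doubleton_oriented_eq:
  fixes h :: "'a \<Rightarrow> 'b::linorder"
  assumes "{u, v} = {u', v'}" and "h u < h v" and "h u' < h v'"
  shows "u = u' \<and> v = v'"
  using assms by (auto simp: doubleton_eq_iff)

lemma cyclic_neighbours_distinct:
  fixes n p :: nat
  assumes "3 \<le> n" and "p < n"
  shows "(p + 1) mod n \<noteq> p \<and> (p + n - 1) mod n \<noteq> p \<and> (p + 1) mod n \<noteq> (p + n - 1) mod n \<and>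
    ((p + n - 1) mod n + 1) mod n = p"
proof -
  consider "p = 0" | "p + 1 = n" | "0 < p" "p + 1 < n" using assms(2) by linarith
  then show ?thesis
  proof cases
    case 1
    then show ?thesis using assms(1) by auto
  next
    case 2
    then have "(p + n - 1) mod n = p - 1" by (simp add: mod_if)
    then show ?thesis using assms 2 by auto
  next
    case 3
    then have "(p + n - 1) mod n = p - 1" using assms(2) by (simp add: mod_if)
    then show ?thesis using assms 3 by auto
  qed
qed

lemma forest_if_at_most_one_higher_nbr:
  fixes h :: "'a \<Rightarrow> 'b::linorder"
  assumes "inj h" and "at_most_one_higher_nbr F h"
  shows "forest F"
  unfolding forest_def
proof
  assume "\<exists>vs. 3 \<le> length vs \<and> distinct vs \<and>
    (\<forall>i<length vs. {vs ! i, vs ! ((i + 1) mod length vs)} \<in> F)"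
  then obtain vs where len: "3 \<le> length vs" and "distinct vs"
    and cycle: "\<And>i. i < length vs \<Longrightarrow> {vs ! i, vs ! ((i + 1) mod length vs)} \<in> F"
    by blast
  define n where "n = length vs"
  \<comment> \<open>The lowest vertex m of the cycle has two distinct higher neighbours on it.\<close>
  obtain m where "m \<in> set vs" and m_min: "\<not> (\<exists>x\<in>set vs. h x < h m)"
    using ex_min_if_finite[of "h ` set vs"] len by force
  then obtain p where p: "p < n" "vs ! p = m" unfolding n_def by (metis in_set_conv_nth)
  have lowest: "h m < h (vs ! i)" if "i < n" "i \<noteq> p" for i
  proof -
    have "vs ! i \<noteq> m" using that p \<open>distinct vs\<close> unfolding n_def by (metis nth_eq_iff_index_eq)
    then have "h (vs ! i) \<noteq> h m" using \<open>inj h\<close> by (meson injD)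
    moreover have "\<not> h (vs ! i) < h m" using m_min that unfolding n_def by simp
    ultimately show ?thesis by simp
  qed
  define q r where "q = (p + 1) mod n" and "r = (p + n - 1) mod n"
  have "0 < n" using len unfolding n_def by linarith
  then have "q < n" "r < n" unfolding q_def r_def by simp_all
  have "q \<noteq> p" "r \<noteq> p" "q \<noteq> r" "(r + 1) mod n = p"
    using cyclic_neighbours_distinct[of n p] len p(1) unfolding q_def r_def n_def by auto
  have "{vs ! p, vs ! q} \<in> F" using cycle[of p] p(1) unfolding q_def n_def by simp
  moreover have "{vs ! r, vs ! p} \<in> F"
    using cycle[of r] \<open>r < n\<close> \<open>(r + 1) mod n = p\<close> unfolding n_def by simp
  ultimately have edges: "{m, vs ! q} \<in> F" "{m, vs ! r} \<in> F" using p(2) by (simp_all add: insert_commute)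
  have "vs ! q = vs ! r"
    using at_most_one_higher_nbrD[OF assms(2) edges] lowest \<open>q < n\<close> \<open>r < n\<close> \<open>q \<noteq> p\<close> \<open>r \<noteq> p\<close>
    by blast
  then show False
    using nth_eq_iff_index_eq[OF \<open>distinct vs\<close>, of q r] \<open>q < n\<close> \<open>r < n\<close> \<open>q \<noteq> r\<close>
    unfolding n_def by simp
qed

lemma components_are_stars:
  fixes h :: "'a \<Rightarrow> 'b::linorder"
  assumes "at_most_one_higher_nbr G h"
    and oriented: "\<And>e. e \<in> G \<Longrightarrow> \<exists>x y. e = {x, y} \<and> h x < h y"
    and centres: "\<And>x y. {x, y} \<in> G \<Longrightarrow> h x < h y \<Longrightarrow> y \<in> Z \<and> x \<notin> Z"
    and "S \<in> components G"
  shows "\<exists>z\<in>S. (\<forall>w\<in>S. w \<noteq> z \<longrightarrow> h w < h z) \<and> (\<forall>e\<in>G. e \<subseteq> S \<longrightarrow> z \<in> e)"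
proof -
  obtain v where S: "S = {w. (v, w) \<in> (adj_rel G)\<^sup>*}" and "v \<in> verts G"
    using \<open>S \<in> components G\<close> unfolding components_def by blast
  then obtain x z where xz: "{x, z} \<in> G" "h x < h z" "v = x \<or> v = z"
    unfolding verts_def using oriented by blast
  have "z \<in> Z" using centres xz by blast
  \<comment> \<open>Centres have no higher neighbours, and the lower neighbours of z are not centres, so
    have no lower neighbours and z as their only higher one: z with them is closed under adjacency.\<close>
  define star where "star = insert z {w. {w, z} \<in> G \<and> h w < h z}"
  have comparable: "h w < h w' \<or> h w' < h w" if "{w, w'} \<in> G" "w \<noteq> w'" for w w'
    using oriented[OF that(1)] that(2) by (auto simp: doubleton_eq_iff)
  have closed: "w' \<in> star" if "w \<in> star" "(w, w') \<in> adj_rel G" for w w'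
  proof -
    have ww': "{w, w'} \<in> G" "w \<noteq> w'" using that(2) unfolding adj_rel_def by auto
    show ?thesis
    proof (cases "w = z")
      case True
      then have "\<not> h w < h w'" using centres[OF ww'(1)] \<open>z \<in> Z\<close> by blast
      then show ?thesis using comparable[OF ww'] ww'(1) True unfolding star_def
        by (simp add: insert_commute)
    next
      case False
      then have leaf: "{w, z} \<in> G" "h w < h z" using \<open>w \<in> star\<close> unfolding star_def by auto
      then have "\<not> h w' < h w" using centres ww'(1) by (metis insert_commute)
      then have "h w < h w'" using comparable[OF ww'] by blast
      then have "w' = z" using at_most_one_higher_nbrD[OF assms(1) ww'(1) leaf(1) _ leaf(2)] by blast
      then show ?thesis unfolding star_def by simp
    qed
  qed
  have S_star: "S \<subseteq> star"
  proof
    fix w assume "w \<in> S"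
    then have "(v, w) \<in> (adj_rel G)\<^sup>*" using S by simp
    then show "w \<in> star"
    proof (induction rule: rtrancl_induct)
      case base
      then show ?case using xz unfolding star_def by auto
    next
      case (step w w')
      then show ?case using closed by blast
    qed
  qed
  have "z \<in> S"
  proof (cases "v = z")
    case False
    then have "(v, z) \<in> adj_rel G" using xz unfolding adj_rel_def by auto
    then show ?thesis using S by simp
  qed (use S in simp)
  moreover have "\<forall>w\<in>S. w \<noteq> z \<longrightarrow> h w < h z" using S_star unfolding star_def by blast
  moreover have "z \<in> e" if "e \<in> G" "e \<subseteq> S" for e
  proof -
    obtain p q where pq: "e = {p, q}" "h p < h q" using oriented[OF \<open>e \<in> G\<close>] by blast
    then have "q \<in> Z" using centres \<open>e \<in> G\<close> by blast
    moreover have "q \<in> star" using pq that S_star by blast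
    ultimately have "q = z" using centres unfolding star_def by blast
    then show ?thesis using pq by simp
  qed
  ultimately show ?thesis by blast
qed

lemma higher_colour_class_components_are_stars:
  fixes h :: "'a \<Rightarrow> 'b::linorder"
  assumes "at_most_one_higher_nbr F h"
    and proper: "\<forall>x y. {x, y} \<in> F \<and> x \<noteq> y \<longrightarrow> c x \<noteq> c y"
    and "S \<in> components {e \<in> F. \<exists>x y. e = {x, y} \<and> h x < h y \<and> c y = j}"
  shows "\<exists>z\<in>S. (\<forall>w\<in>S. w \<noteq> z \<longrightarrow> h w < h z) \<and>
           (\<forall>e\<in>{e \<in> F. \<exists>x y. e = {x, y} \<and> h x < h y \<and> c y = j}. e \<subseteq> S \<longrightarrow> z \<in> e)"
proof (rule components_are_stars[where Z = "{y. c y = j}"])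
  let ?G = "{e \<in> F. \<exists>x y. e = {x, y} \<and> h x < h y \<and> c y = j}"
  show "at_most_one_higher_nbr ?G h"
    using assms(1) by (rule at_most_one_higher_nbr_subset) blast
  show "\<exists>x y. e = {x, y} \<and> h x < h y" if "e \<in> ?G" for e
    using that by blast
  show "y \<in> {y. c y = j} \<and> x \<notin> {y. c y = j}" if xy: "{x, y} \<in> ?G" and lt: "h x < h y" for x y
  proof -
    obtain x' y' where x'y': "{x, y} = {x', y'}" "h x' < h y'" "c y' = j"
      using xy by blast
    have "y = y'" using doubleton_oriented_eq[OF x'y'(1) lt x'y'(2)] by simp
    then have "c y = j" using x'y'(3) by simp
    moreover have "c x \<noteq> c y" using proper xy less_imp_neq[OF lt] by blast
    ultimately show ?thesis by simp
  qed
qed (rule assms(3))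

section \<open>The decomposition procedure\<close>

lemma removed_subset: "removed E b k W \<subseteq> W"
  unfolding removed_def by blast

lemma Vset_antimono: "i \<le> j \<Longrightarrow> Vset V E b k j \<subseteq> Vset V E b k i"
  by (induction j rule: dec_induct) auto

lemma Vset_subset: "Vset V E b k i \<subseteq> V"
  using Vset_antimono[of 0 i] by simp

definition rank :: "'a set \<Rightarrow> 'a set set \<Rightarrow> nat \<Rightarrow> nat \<Rightarrow> 'a \<Rightarrow> nat \<times> 'a" where
  "rank V E b k u = (layer V E b k u, u)"

lemma lower_iff_rank_less:
  "lower V E b k u v \<longleftrightarrow> rank V E b k u < rank V E b k v"
  unfolding lower_def rank_def less_prod_def by auto

lemma inj_rank: "inj (rank V E b k)"
  by (rule injI) (simp add: rank_def)

definition atypical_up_edges :: "'a::linorder set \<Rightarrow> 'a set set \<Rightarrow> nat \<Rightarrow> nat \<Rightarrow> 'a \<Rightarrow> 'a set set" where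
  "atypical_up_edges V E b k u = {e \<in> atypical V E b k. \<exists>v. e = {u, v} \<and> lower V E b k u v}"

lemma atypical_up_edges_disjoint:
  assumes "e \<in> atypical_up_edges V E b k u" and "e \<in> atypical_up_edges V E b k w"
  shows "u = w"
proof -
  obtain v v' where "e = {u, v}" "rank V E b k u < rank V E b k v"
    and "e = {w, v'}" "rank V E b k w < rank V E b k v'"
    using assms unfolding atypical_up_edges_def lower_iff_rank_less by blast
  then show ?thesis using doubleton_oriented_eq[of u v w v'] by blast
qed

lemma atypical_in_up_edges:
  assumes "e \<in> atypical V E b k"
  obtains u where "e \<in> atypical_up_edges V E b k u"
proof -
  obtain u v where "e = {u, v}" "layer V E b k u < layer V E b k v"
    using assms unfolding atypical_def by blast
  then have "e \<in> atypical_up_edges V E b k u"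
    using assms unfolding atypical_up_edges_def lower_def by blast
  then show thesis by (rule that)
qed

lemma valid_col_at_most_one_higher_nbr:
  assumes "valid_col V E b k a col"
  shows "at_most_one_higher_nbr {e \<in> atypical V E b k. col e = i} (rank V E b k)"
  unfolding at_most_one_higher_nbr_def
proof (intro allI impI)
  fix u v w
  assume edges: "{u, v} \<in> {e \<in> atypical V E b k. col e = i} \<and> {u, w} \<in> {e \<in> atypical V E b k. col e = i} \<and>
    rank V E b k u < rank V E b k v \<and> rank V E b k u < rank V E b k w"
  then have "{u, v} \<in> atypical_up_edges V E b k u" "{u, w} \<in> atypical_up_edges V E b k u"
    unfolding atypical_up_edges_def lower_iff_rank_less by blast+
  moreover have "inj_on col (atypical_up_edges V E b k u)"
    using assms unfolding valid_col_def atypical_up_edges_def by blast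
  ultimately have "{u, v} = {u, w}" using edges by (auto dest: inj_onD)
  then show "v = w" using edges by (auto simp: doubleton_eq_iff)
qed

lemma exists_injective_colouring:
  assumes "\<And>u. finite (S u)" and "\<And>u. card (S u) \<le> m"
    and disjoint: "\<And>u w e. e \<in> S u \<Longrightarrow> e \<in> S w \<Longrightarrow> u = w"
  shows "\<exists>col. \<forall>u. col ` S u \<subseteq> {1..m} \<and> inj_on col (S u)"
proof -
  have "\<exists>f. f ` S u \<subseteq> {1..m} \<and> inj_on f (S u)" for u
    using card_le_inj[of "S u" "{1..m}"] assms(1,2) by simp
  then obtain f where f: "\<And>u. f u ` S u \<subseteq> {1..m} \<and> inj_on (f u) (S u)" by metis
  define col where "col e = f (SOME u. e \<in> S u) e" for e
  have "col e = f u e" if "e \<in> S u" for e u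
    using disjoint[OF someI[of "\<lambda>u. e \<in> S u", OF that] that] unfolding col_def by simp
  then have "col ` S u = f u ` S u" "inj_on col (S u) \<longleftrightarrow> inj_on (f u) (S u)" for u
    by (simp_all cong: image_cong inj_on_cong)
  then show ?thesis using f by metis
qed

locale arboricity_decomposition =
  fixes V :: "'a::linorder set" and E :: "'a set set" and a k :: nat
  assumes simple: "simple_graph V E" and arboricity: "arboricity_le E a" and k_ge: "2 * a \<le> k"
begin

lemma finite_V: "finite V"
  using simple unfolding simple_graph_def by blast

lemma removed_nonempty:
  assumes "W \<subseteq> V" and "W \<noteq> {}"
  shows "removed E (2 * a) k W \<noteq> {}"
proof -
  obtain x where x: "x \<in> W" "deg_in E W x \<le> 2 * a"
    using exists_deg_in_le_twice_arboricity[OF simple arboricity assms] by blast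
  have "finite W" using finite_V assms(1) by (rule rev_finite_subset)
  then have "card {v \<in> W. {x, v} \<in> E \<and> k < deg_in E W v} \<le> deg_in E W x"
    unfolding deg_in_def by (intro card_mono) auto
  then have "x \<in> removed E (2 * a) k W"
    using x k_ge unfolding removed_def by auto
  then show ?thesis by blast
qed

lemma card_Vset_le: "card (Vset V E (2 * a) k i) \<le> card V - i"
proof (induction i)
  case (Suc i)
  let ?W = "Vset V E (2 * a) k i"
  show ?case
  proof (cases "?W = {}")
    case False
    have "finite ?W" using finite_V Vset_subset by (rule rev_finite_subset)
    moreover have "Vset V E (2 * a) k (Suc i) \<subset> ?W"
      using removed_nonempty[OF Vset_subset False] removed_subset[of E "2 * a" k ?W] by auto
    ultimately have "card (Vset V E (2 * a) k (Suc i)) < card ?W"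
      by (simp add: psubset_card_mono)
    then show ?thesis using Suc.IH by linarith
  qed simp
qed simp

lemma mem_removed_at_layer:
  assumes "u \<in> V"
  shows "u \<in> removed E (2 * a) k (Vset V E (2 * a) k (layer V E (2 * a) k u - 1))"
proof -
  have "Vset V E (2 * a) k (card V) = {}"
    using card_Vset_le[of "card V"] rev_finite_subset[OF finite_V Vset_subset] by simp
  then have "\<exists>n. u \<notin> Vset V E (2 * a) k n" by blast
  define n where "n = (LEAST n. u \<notin> Vset V E (2 * a) k n)"
  have "u \<notin> Vset V E (2 * a) k n"
    unfolding n_def by (rule LeastI_ex) fact
  moreover have "n \<noteq> 0" using calculation assms by (intro notI) simp
  moreover have "u \<in> Vset V E (2 * a) k (n - 1)"
    using not_less_Least[of "n - 1" "\<lambda>n. u \<notin> Vset V E (2 * a) k n", folded n_def] \<open>n \<noteq> 0\<close>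
    by simp
  ultimately have "u \<in> layer_set V E (2 * a) k n"
    unfolding layer_set_def by (cases n) auto
  then have "u \<in> layer_set V E (2 * a) k (layer V E (2 * a) k u)"
    unfolding layer_def by (rule LeastI)
  then show ?thesis unfolding layer_set_def by (auto split: if_splits)
qed

lemma mem_Vset_before_layer:
  assumes "v \<in> V" and "i < layer V E (2 * a) k v"
  shows "v \<in> Vset V E (2 * a) k i"
  using mem_removed_at_layer[OF assms(1)] removed_subset Vset_antimono[of i "layer V E (2 * a) k v - 1"]
    assms(2) by fastforce

lemma atypical_up_edges_subset:
  fixes u :: 'a
  defines "W \<equiv> Vset V E (2 * a) k (layer V E (2 * a) k u - 1)"
  shows "atypical_up_edges V E (2 * a) k u \<subseteq> (\<lambda>v. {u, v}) ` {v \<in> W. {u, v} \<in> E \<and> k < deg_in E W v}"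
proof
  fix e assume "e \<in> atypical_up_edges V E (2 * a) k u"
  then obtain v u' v' where e: "e = {u, v}" "lower V E (2 * a) k u v" "e \<in> E" "e = {u', v'}"
    "layer V E (2 * a) k u' < layer V E (2 * a) k v'"
    "k < deg_in E (Vset V E (2 * a) k (layer V E (2 * a) k u' - 1)) v'"
    unfolding atypical_up_edges_def atypical_def by blast
  then have "lower V E (2 * a) k u' v'" unfolding lower_def by simp
  then have "u' = u" "v' = v"
    using doubleton_oriented_eq[of u v u' v' "rank V E (2 * a) k"] e(1,2,4)
    unfolding lower_iff_rank_less by auto
  moreover have "v \<in> V" using simple_graph_edge_subset[OF simple] e(1,3) by blast
  ultimately have "v \<in> W" using mem_Vset_before_layer e(5) unfolding W_def by simp
  then show "e \<in> (\<lambda>v. {u, v}) ` {v \<in> W. {u, v} \<in> E \<and> k < deg_in E W v}"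
    using e \<open>u' = u\<close> \<open>v' = v\<close> unfolding W_def by blast
qed

lemma card_atypical_up_edges_le:
  "finite (atypical_up_edges V E (2 * a) k u) \<and> card (atypical_up_edges V E (2 * a) k u) \<le> 2 * a"
proof -
  define W where "W = Vset V E (2 * a) k (layer V E (2 * a) k u - 1)"
  let ?H = "{v \<in> W. {u, v} \<in> E \<and> k < deg_in E W v}"
  have "finite ?H" using rev_finite_subset[OF finite_V Vset_subset] unfolding W_def by simp
  moreover have "card ?H \<le> 2 * a"
  proof (cases "u \<in> V")
    case True
    then show ?thesis using mem_removed_at_layer unfolding removed_def W_def by blast
  next
    case False
    then have "?H = {}" using simple_graph_edge_subset[OF simple] by blast
    then show ?thesis by (metis card.empty le0)
  qed
  ultimately show ?thesis
    using atypical_up_edges_subset[of u] card_image_le[of ?H "\<lambda>v. {u, v}"] unfolding W_def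
    by (meson finite_imageI card_mono order_trans rev_finite_subset)
qed

lemma valid_col_exists: "\<exists>col. valid_col V E (2 * a) k a col"
proof -
  obtain col where col: "\<And>u. col ` atypical_up_edges V E (2 * a) k u \<subseteq> {1..2 * a} \<and>
      inj_on col (atypical_up_edges V E (2 * a) k u)"
    using exists_injective_colouring[of "atypical_up_edges V E (2 * a) k" "2 * a"]
      card_atypical_up_edges_le atypical_up_edges_disjoint by metis
  have "col e \<in> {1..2 * a}" if "e \<in> atypical V E (2 * a) k" for e
    using atypical_in_up_edges[OF that] col by blast
  moreover have "inj_on col (atypical_up_edges V E (2 * a) k u)" for u
    using col by blast
  ultimately have "valid_col V E (2 * a) k a col"
    unfolding valid_col_def atypical_up_edges_def by blast
  then show ?thesis by blast
qed

end

theorem mainTheorem8: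
  fixes V :: "'a::linorder set" and E :: "'a set set" and n a k :: nat
  assumes "simple_graph V E" and "card V = n"
    and "a \<ge> 1" and "arboricity_le E a" and "k \<ge> 5 * a"
  shows "(\<exists>col. valid_col V E (2*a) k a col) \<and>
    (\<forall>col. valid_col V E (2*a) k a col \<longrightarrow>
      (\<forall>i\<in>{1..2*a}.
        let F = {e \<in> atypical V E (2*a) k. col e = i} in
        forest F \<and>
        (\<forall>u\<in>verts F. card {v. {u, v} \<in> F \<and> lower V E (2*a) k u v} \<le> 1) \<and>
        (\<forall>c :: 'a \<Rightarrow> nat.
           (\<forall>v\<in>verts F. c v \<in> {1, 2, 3}) \<and> (\<forall>x y. {x, y} \<in> F \<and> x \<noteq> y \<longrightarrow> c x \<noteq> c y) \<longrightarrow>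
           (\<forall>j\<in>{1, 2, 3}.
              let Fj = {e \<in> F. \<exists>x y. e = {x, y} \<and> lower V E (2*a) k x y \<and> c y = j} in
              \<forall>S\<in>components Fj. \<exists>z\<in>S.
                 (\<forall>w\<in>S. w \<noteq> z \<longrightarrow> lower V E (2*a) k w z) \<and>
                 (\<forall>e\<in>Fj. e \<subseteq> S \<longrightarrow> z \<in> e)))))"
proof -
  interpret arboricity_decomposition V E a k
    using assms by unfold_locales simp_all
  let ?h = "rank V E (2 * a) k"
  show ?thesis
    unfolding Let_def lower_iff_rank_less
  proof (intro conjI allI impI ballI)
    show "\<exists>col. valid_col V E (2 * a) k a col" by (rule valid_col_exists)
  next
    fix col i assume col: "valid_col V E (2 * a) k a col"
    let ?F = "{e \<in> atypical V E (2 * a) k. col e = i}"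
    have F: "at_most_one_higher_nbr ?F ?h" using col by (rule valid_col_at_most_one_higher_nbr)
    show "forest ?F" using inj_rank F by (rule forest_if_at_most_one_higher_nbr)
    show "card {v. {u, v} \<in> ?F \<and> ?h u < ?h v} \<le> 1" for u
      using F by (rule card_higher_nbrs_le_one)
    fix c :: "'a \<Rightarrow> nat" and j S
    assume colouring: "(\<forall>v\<in>verts ?F. c v \<in> {1, 2, 3}) \<and> (\<forall>x y. {x, y} \<in> ?F \<and> x \<noteq> y \<longrightarrow> c x \<noteq> c y)"
      and component: "S \<in> components {e \<in> ?F. \<exists>x y. e = {x, y} \<and> ?h x < ?h y \<and> c y = j}"
    show "\<exists>z\<in>S. (\<forall>w\<in>S. w \<noteq> z \<longrightarrow> ?h w < ?h z) \<and>
        (\<forall>e\<in>{e \<in> ?F. \<exists>x y. e = {x, y} \<and> ?h x < ?h y \<and> c y = j}. e \<subseteq> S \<longrightarrow> z \<in> e)"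
      using higher_colour_class_components_are_stars[OF F conjunct2[OF colouring] component] .
  qed
qed

end
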